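(* Let $n$ be a positive integer with $\gcd(n,5)=\gcd(n,2)=1$. Then the families of $2$-constacyclic and $4$-constacyclic codes of length $n$ over $\mathbb{F}_5$ are monomially equivalent.
   Context: For $c\in\mathbb{F}_q^*$, a linear code $C\subseteq\mathbb{F}_q^n$ is called $c$-constacyclic if for every codeword $(c_0,c_1,\ldots,c_{n-1})\in C$ we also have $(c\, c_{n-1},c_0,\ldots,c_{n-2})\in C$. An isometry of linear codes is an $\mathbb{F}_q$-linear isomorphism preserving Hamming distance (equivalently, a map given by a monomial matrix). For $a,b\in\mathbb{F}_q^*$, the families of $a$-constacyclic and $b$-constacyclic codes of length $n$ over $\mathbb{F}_q$ are called monomially equivalent if there is a one-to-one correspondence between the set of $a$-constacyclic codes and the set of $b$-constacyclic codes of length $n$ given by an isometry of linear codes. *)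

theory Defs
  imports "HOL-Combinatorics.Permutations"
begin

definition words :: "nat \<Rightarrow> (nat \<Rightarrow> 'a::field) set" where
  "words n = {v. \<forall>i\<ge>n. v i = 0}"

definition linear_code :: "nat \<Rightarrow> (nat \<Rightarrow> 'a::field) set \<Rightarrow> bool" where
  "linear_code n C \<longleftrightarrow> C \<subseteq> words n \<and> (\<lambda>_. 0) \<in> C
     \<and> (\<forall>u\<in>C. \<forall>v\<in>C. (\<lambda>i. u i + v i) \<in> C)
     \<and> (\<forall>a. \<forall>v\<in>C. (\<lambda>i. a * v i) \<in> C)"

definition const_shift :: "nat \<Rightarrow> 'a::field \<Rightarrow> (nat \<Rightarrow> 'a) \<Rightarrow> (nat \<Rightarrow> 'a)" where
  "const_shift n c v = (\<lambda>i. if i = 0 then c * v (n - 1) else if i < n then v (i - 1) else 0)"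

definition constacyclic :: "nat \<Rightarrow> 'a::field \<Rightarrow> (nat \<Rightarrow> 'a) set \<Rightarrow> bool" where
  "constacyclic n c C \<longleftrightarrow> linear_code n C \<and> (\<forall>v\<in>C. const_shift n c v \<in> C)"

definition constacyclic_codes :: "nat \<Rightarrow> 'a::field \<Rightarrow> (nat \<Rightarrow> 'a) set set" where
  "constacyclic_codes n c = {C. constacyclic n c C}"

definition monomial_map :: "nat \<Rightarrow> ((nat \<Rightarrow> 'a::field) \<Rightarrow> (nat \<Rightarrow> 'a)) \<Rightarrow> bool" where
  "monomial_map n \<phi> \<longleftrightarrow> (\<exists>\<sigma> d. \<sigma> permutes {..<n} \<and> (\<forall>i<n. d i \<noteq> 0) \<and>
      (\<forall>v. \<phi> v = (\<lambda>i. if i < n then d i * v (\<sigma> i) else 0)))"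

definition monomially_equivalent :: "nat \<Rightarrow> 'a::field \<Rightarrow> 'a \<Rightarrow> bool" where
  "monomially_equivalent n a b \<longleftrightarrow> a \<noteq> 0 \<and> b \<noteq> 0 \<and>
     (\<exists>\<phi>. monomial_map n \<phi> \<and>
        bij_betw (\<lambda>C. \<phi> ` C) (constacyclic_codes n a) (constacyclic_codes n b))"

end

theory Submission
  imports Defs "HOL-Number_Theory.Residues"
begin

text \<open>Rescaling coordinate i by l^i turns the a-twisted shift into l^-1 times the
  b-twisted shift whenever l^n b = a, so this diagonal monomial map carries the
  a-constacyclic codes bijectively onto the b-constacyclic codes. Over F_5 we have
  5 = 0 and 2^4 = 1, and for odd n the choice l = 2^(3n) gives
  l^n * 4 = 2^(3n^2 + 2) = 2, since 3n^2 + 2 is 1 modulo 4.\<close>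

definition scale_by_powers :: "nat \<Rightarrow> 'a::field \<Rightarrow> (nat \<Rightarrow> 'a) \<Rightarrow> (nat \<Rightarrow> 'a)" where
  "scale_by_powers n l v = (\<lambda>i. if i < n then l ^ i * v i else 0)"

lemma monomial_map_scale_by_powers:
  assumes "l \<noteq> 0"
  shows "monomial_map n (scale_by_powers n l)"
  unfolding monomial_map_def
  by (rule exI[of _ id], rule exI[of _ "\<lambda>i. l ^ i"]) (use assms in \<open>auto simp: scale_by_powers_def\<close>)

lemma scale_by_powers_inverse:
  assumes "l \<noteq> 0" and "v \<in> words n"
  shows "scale_by_powers n (inverse l) (scale_by_powers n l v) = v"
proof
  fix i
  show "scale_by_powers n (inverse l) (scale_by_powers n l v) i = v i"
  proof (cases "i < n")
    case True
    have "inverse l ^ i * (l ^ i * v i) = (inverse l * l) ^ i * v i"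
      by (simp only: power_mult_distrib mult.assoc)
    then show ?thesis
      using True assms(1) by (simp add: scale_by_powers_def)
  next
    case False
    then show ?thesis
      using assms(2) by (simp add: scale_by_powers_def words_def)
  qed
qed

lemma image_scale_by_powers_inverse:
  assumes "l \<noteq> 0" and "C \<subseteq> words n"
  shows "scale_by_powers n (inverse l) ` scale_by_powers n l ` C = C"
proof -
  have "scale_by_powers n (inverse l) ` scale_by_powers n l ` C
      = (\<lambda>v. scale_by_powers n (inverse l) (scale_by_powers n l v)) ` C"
    by (rule image_image)
  also have "\<dots> = id ` C"
    using assms by (intro image_cong) (auto simp: scale_by_powers_inverse)
  finally show ?thesis
    by simp
qed

lemma linear_code_image_scale_by_powers:
  assumes "linear_code n C"
  shows "linear_code n (scale_by_powers n l ` C)"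
proof -
  have add: "(\<lambda>i. scale_by_powers n l u i + scale_by_powers n l v i)
      = scale_by_powers n l (\<lambda>i. u i + v i)" for u v
    by (auto simp: scale_by_powers_def algebra_simps)
  have smult: "(\<lambda>i. c * scale_by_powers n l v i) = scale_by_powers n l (\<lambda>i. c * v i)" for c v
    by (auto simp: scale_by_powers_def algebra_simps)
  have zero: "scale_by_powers n l (\<lambda>_. 0) = (\<lambda>_. 0)"
    by (auto simp: scale_by_powers_def)
  have "scale_by_powers n l ` C \<subseteq> words n"
    by (auto simp: words_def scale_by_powers_def)
  moreover have "(\<lambda>_. 0) \<in> scale_by_powers n l ` C"
    using assms zero by (metis image_eqI linear_code_def)
  ultimately show ?thesis
    using assms unfolding linear_code_def by (auto simp: add smult)
qed

lemma const_shift_scale_by_powers: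
  assumes "l \<noteq> 0" and "l ^ n * b = a"
  shows "const_shift n b (scale_by_powers n l v)
       = (\<lambda>i. inverse l * scale_by_powers n l (const_shift n a v) i)"
proof
  fix i
  show "const_shift n b (scale_by_powers n l v) i
      = inverse l * scale_by_powers n l (const_shift n a v) i"
  proof (cases "0 < i \<and> i < n")
    case True
    then have "l ^ i = l * l ^ (i - 1)"
      by (simp flip: power_Suc)
    then show ?thesis
      using True assms(1) by (simp add: const_shift_def scale_by_powers_def less_imp_diff_less)
  next
    case False
    moreover have "l ^ n = l * l ^ (n - 1)" if "0 < n"
      using that by (simp flip: power_Suc)
    ultimately show ?thesis
      using assms by (auto simp: const_shift_def scale_by_powers_def)
  qed
qed

lemma constacyclic_image_scale_by_powers:
  assumes "constacyclic n a C" and "l \<noteq> 0" and "l ^ n * b = a"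
  shows "constacyclic n b (scale_by_powers n l ` C)"
  unfolding constacyclic_def
proof (intro conjI ballI)
  have lin: "linear_code n (scale_by_powers n l ` C)"
    using assms(1) linear_code_image_scale_by_powers by (auto simp: constacyclic_def)
  then show "linear_code n (scale_by_powers n l ` C)" .
  fix w
  assume "w \<in> scale_by_powers n l ` C"
  then obtain v where v: "v \<in> C" "w = scale_by_powers n l v"
    by blast
  then have "scale_by_powers n l (const_shift n a v) \<in> scale_by_powers n l ` C"
    using assms(1) by (auto simp: constacyclic_def)
  then have "(\<lambda>i. inverse l * scale_by_powers n l (const_shift n a v) i) \<in> scale_by_powers n l ` C"
    using lin by (auto simp: linear_code_def)
  then show "const_shift n b w \<in> scale_by_powers n l ` C"
    using v const_shift_scale_by_powers[OF assms(2,3)] by simp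
qed

lemma monomially_equivalent_if_power_ratio:
  fixes a b l :: "'a::field"
  assumes "a \<noteq> 0" and "b \<noteq> 0" and "l \<noteq> 0" and "l ^ n * b = a"
  shows "monomially_equivalent n a b"
  unfolding monomially_equivalent_def
proof (intro conjI exI)
  show "a \<noteq> 0" "b \<noteq> 0" "monomial_map n (scale_by_powers n l)"
    using assms monomial_map_scale_by_powers by auto
  have "inverse l ^ n * a = (inverse l * l) ^ n * b"
    using assms(4) by (simp only: power_mult_distrib mult.assoc)
  then have inv_l: "inverse l \<noteq> 0" "inverse l ^ n * a = b"
    using assms(3) by simp_all
  have in_words: "C \<subseteq> words n" if "C \<in> constacyclic_codes n c" for C c
    using that by (simp add: constacyclic_codes_def constacyclic_def linear_code_def)
  show "bij_betw (\<lambda>C. scale_by_powers n l ` C) (constacyclic_codes n a) (constacyclic_codes n b)"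
  proof (rule bij_betw_byWitness[where f' = "\<lambda>C. scale_by_powers n (inverse l) ` C"])
    show "\<forall>C\<in>constacyclic_codes n a. scale_by_powers n (inverse l) ` scale_by_powers n l ` C = C"
      using image_scale_by_powers_inverse[OF assms(3) in_words] by blast
    show "\<forall>C\<in>constacyclic_codes n b. scale_by_powers n l ` scale_by_powers n (inverse l) ` C = C"
      using image_scale_by_powers_inverse[OF inv_l(1) in_words] by (metis inverse_inverse_eq)
    show "(\<lambda>C. scale_by_powers n l ` C) ` constacyclic_codes n a \<subseteq> constacyclic_codes n b"
      using constacyclic_image_scale_by_powers[OF _ assms(3,4)]
      by (auto simp: constacyclic_codes_def)
    show "(\<lambda>C. scale_by_powers n (inverse l) ` C) ` constacyclic_codes n b \<subseteq> constacyclic_codes n a"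
      using constacyclic_image_scale_by_powers[OF _ inv_l] by (auto simp: constacyclic_codes_def)
  qed
qed

lemma of_nat_card_UNIV_eq_0: "of_nat (card (UNIV :: 'a::ring_1 set)) = (0::'a)"
  by (simp add: of_nat_eq_0_iff_char_dvd CHAR_dvd_CARD)

lemma power_of_2_mod_4:
  assumes "(5::'a::comm_ring_1) = 0"
  shows "(2::'a) ^ k = 2 ^ (k mod 4)"
proof -
  have "(2::'a) ^ 4 = 1 + 3 * 5"
    by simp
  then have two_pow_4: "(2::'a) ^ 4 = 1"
    using assms by simp
  have "(2::'a) ^ k = 2 ^ (4 * (k div 4) + k mod 4)"
    by simp
  also have "\<dots> = ((2::'a) ^ 4) ^ (k div 4) * 2 ^ (k mod 4)"
    by (simp only: power_add power_mult)
  finally show ?thesis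
    using two_pow_4 by simp
qed

theorem proposition4p2:
  fixes n :: nat
  assumes "card (UNIV :: 'a::field set) = 5"
    and "n > 0" and "coprime n 5" and "coprime n 2"
  shows "monomially_equivalent n (2::'a) 4"
proof -
  have five: "(5::'a) = 0"
    using of_nat_card_UNIV_eq_0[where 'a = 'a] assms(1) by simp
  have two: "(2::'a) \<noteq> 0"
  proof
    assume "(2::'a) = 0"
    moreover have "(5::'a) = 2 * 2 + 1"
      by simp
    ultimately show False
      using five by simp
  qed
  obtain m where "n = 2 * m + 1"
    using assms(4) by (metis coprime_right_2_iff_odd oddE)
  then have "3 * n * n + 2 = 4 * (3 * m * m + 3 * m + 1) + 1"
    by (simp add: algebra_simps)
  then have exponent_mod_4: "(3 * n * n + 2) mod 4 = 1"
    by (simp only: mod_mult_self4) simp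
  have "((2::'a) ^ (3 * n)) ^ n * 4 = 2 ^ (3 * n * n + 2)"
    by (simp add: power_add flip: power_mult)
  also have "\<dots> = 2 ^ ((3 * n * n + 2) mod 4)"
    by (rule power_of_2_mod_4[OF five])
  also have "\<dots> = 2"
    by (simp only: exponent_mod_4) simp
  finally show ?thesis
    using two by (intro monomially_equivalent_if_power_ratio[where l = "2 ^ (3 * n)"]) auto
qed

end
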